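(* Let $\mathcal{D}=(\mathcal{V},\mathcal{E})$ be a simple digraph with $\mathcal{V}=\{1,\ldots,n\}$, $n\ge 2$, and let $L$ be its Laplacian matrix with rows $L_1,\dots,L_n$. Then $$r_{\max}(\mathcal{D})=\min_{b^1,b^2}\ \max\Big(\max_{i} L_i b^1,\ \max_j L_j b^2\Big)$$ subject to $b^1+b^2\le \mathbf 1$ (componentwise), $1\le \mathbf 1^T b^1\le n-1$, $1\le \mathbf 1^T b^2\le n-1$, and $b^1,b^2\in\{0,1\}^n$, where $i,j$ range over $\{1,\ldots,n\}$.
   Context: A simple digraph has no self-loops and at most one directed edge $(i,j)$ from $i$ to $j$. For $j\in\mathcal{V}$, $\mathcal{N}_j=\{i\in\mathcal{V}:(i,j)\in\mathcal{E}\}$ is the set of in-neighbors of $j$. The Laplacian $L\in\mathbb{R}^{n\times n}$ has entries $L_{j,j}=|\mathcal{N}_j|$, $L_{j,i}=-1$ if $i\neq j$ and $i\in\mathcal{N}_j$, and $L_{j,i}=0$ if $i\ne j$ and $i\notin\mathcal{N}_j$. For $r\in\mathbb{Z}_{\ge 0}$, a nonempty subset $S\subseteq\mathcal{V}$ is $r$-reachable if there exists $i\in S$ with $|\mathcal{N}_i\setminus S|\ge r$. A digraph on $n\ge 2$ nodes is $r$-robust if for every pair of nonempty, disjoint subsets of $\mathcal{V}$, at least one of them is $r$-reachable. $r_{\max}(\mathcal{D})$ denotes the largest integer $r\ge 0$ for which $\mathcal{D}$ is $r$-robust. $\mathbf 1$ is the all-ones vector of length $n$. *)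

theory Defs
  imports Main
begin

text \<open>Digraphs on the vertex set V = {1..n}, given by an edge set E of pairs (i,j),
  meaning an edge from i to j.  Using a set of pairs makes "at most one edge from i to j"
  automatic.\<close>

definition simple_digraph :: "nat \<Rightarrow> (nat \<times> nat) set \<Rightarrow> bool" where
  "simple_digraph n E \<longleftrightarrow> E \<subseteq> {1..n} \<times> {1..n} \<and> (\<forall>i. (i, i) \<notin> E)"

definition in_nbrs :: "(nat \<times> nat) set \<Rightarrow> nat \<Rightarrow> nat set" where
  "in_nbrs E j = {i. (i, j) \<in> E}"

definition laplacian :: "(nat \<times> nat) set \<Rightarrow> nat \<Rightarrow> nat \<Rightarrow> int" where
  "laplacian E j i =
     (if i = j then int (card (in_nbrs E j)) else if i \<in> in_nbrs E j then -1 else 0)"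

definition lap_row_mult :: "nat \<Rightarrow> (nat \<times> nat) set \<Rightarrow> nat \<Rightarrow> (nat \<Rightarrow> int) \<Rightarrow> int" where
  "lap_row_mult n E j b = (\<Sum>k\<in>{1..n}. laplacian E j k * b k)"

definition r_reachable :: "(nat \<times> nat) set \<Rightarrow> nat \<Rightarrow> nat set \<Rightarrow> bool" where
  "r_reachable E r S \<longleftrightarrow> S \<noteq> {} \<and> (\<exists>i\<in>S. card (in_nbrs E i - S) \<ge> r)"

definition r_robust :: "nat \<Rightarrow> (nat \<times> nat) set \<Rightarrow> nat \<Rightarrow> bool" where
  "r_robust n E r \<longleftrightarrow>
     (\<forall>S1 S2. S1 \<subseteq> {1..n} \<longrightarrow> S2 \<subseteq> {1..n} \<longrightarrow> S1 \<noteq> {} \<longrightarrow> S2 \<noteq> {} \<longrightarrow>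
        S1 \<inter> S2 = {} \<longrightarrow> r_reachable E r S1 \<or> r_reachable E r S2)"

definition r_max :: "nat \<Rightarrow> (nat \<times> nat) set \<Rightarrow> nat" where
  "r_max n E = (GREATEST r. r_robust n E r)"

end

theory Submission
  imports Defs "HOL-Library.Indicator_Function"
begin

text \<open>A feasible pair \<open>(b\<^sup>1, b\<^sup>2)\<close> is exactly a pair of indicator vectors of nonempty
  disjoint vertex sets \<open>S\<^sub>1, S\<^sub>2\<close>.  For a nonempty \<open>S\<close>, the row \<open>L\<^sub>i\<close> applied to the
  indicator of \<open>S\<close> equals \<open>|\<N>\<^sub>i \ S|\<close> if \<open>i \<in> S\<close> and is \<open>\<le> 0\<close> otherwise, so
  \<open>max\<^sub>i L\<^sub>i \<one>\<^sub>S\<close> is the largest \<open>r\<close> for which \<open>S\<close> is \<open>r\<close>-reachable.  Hence the objective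
  is the largest \<open>r\<close> for which \<open>S\<^sub>1\<close> or \<open>S\<^sub>2\<close> is \<open>r\<close>-reachable, and its minimum over all
  pairs is the largest \<open>r\<close> for which every pair has an \<open>r\<close>-reachable member.\<close>

definition reachability :: "(nat \<times> nat) set \<Rightarrow> nat set \<Rightarrow> nat" where
  "reachability E S = Max ((\<lambda>i. card (in_nbrs E i - S)) ` S)"

definition nonempty_disjoint_pairs :: "nat \<Rightarrow> (nat set \<times> nat set) set" where
  "nonempty_disjoint_pairs n =
     {(S1, S2). S1 \<subseteq> {1..n} \<and> S2 \<subseteq> {1..n} \<and> S1 \<noteq> {} \<and> S2 \<noteq> {} \<and> S1 \<inter> S2 = {}}"

definition feasible_pairs :: "nat \<Rightarrow> ((nat \<Rightarrow> int) \<times> (nat \<Rightarrow> int)) set" where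
  "feasible_pairs n =
     {(b1, b2). (\<forall>k. k \<notin> {1..n} \<longrightarrow> b1 k = 0 \<and> b2 k = 0)
              \<and> (\<forall>k\<in>{1..n}. b1 k \<in> {0, 1} \<and> b2 k \<in> {0, 1} \<and> b1 k + b2 k \<le> 1)
              \<and> 1 \<le> (\<Sum>k\<in>{1..n}. b1 k) \<and> (\<Sum>k\<in>{1..n}. b1 k) \<le> int n - 1
              \<and> 1 \<le> (\<Sum>k\<in>{1..n}. b2 k) \<and> (\<Sum>k\<in>{1..n}. b2 k) \<le> int n - 1}"

lemma r_reachable_iff_le_reachability:
  assumes "finite S" "S \<noteq> {}"
  shows "r_reachable E r S \<longleftrightarrow> r \<le> reachability E S"
  using assms by (auto simp: r_reachable_def reachability_def Max_ge_iff)

lemma r_robust_iff_le_reachability: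
  "r_robust n E r \<longleftrightarrow>
     (\<forall>(S1, S2) \<in> nonempty_disjoint_pairs n. r \<le> max (reachability E S1) (reachability E S2))"
proof -
  have "r_reachable E r S \<longleftrightarrow> r \<le> reachability E S" if "S \<subseteq> {1..n}" "S \<noteq> {}" for S
    using that finite_subset by (intro r_reachable_iff_le_reachability) auto
  then show ?thesis
    unfolding r_robust_def nonempty_disjoint_pairs_def le_max_iff_disj by auto
qed

lemma nonempty_disjoint_pairs_finite: "finite (nonempty_disjoint_pairs n)"
  by (rule finite_subset[of _ "Pow {1..n} \<times> Pow {1..n}"])
     (auto simp: nonempty_disjoint_pairs_def)

lemma nonempty_disjoint_pairs_nonempty:
  assumes "n \<ge> 2"
  shows "nonempty_disjoint_pairs n \<noteq> {}"
proof -
  have "({1}, {2}) \<in> nonempty_disjoint_pairs n"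
    using assms by (auto simp: nonempty_disjoint_pairs_def)
  then show ?thesis by blast
qed

lemma r_max_eq_Min_reachability:
  assumes "n \<ge> 2"
  shows "r_max n E =
    Min ((\<lambda>(S1, S2). max (reachability E S1) (reachability E S2)) ` nonempty_disjoint_pairs n)"
    (is "_ = Min ?R")
proof -
  have R: "finite ?R" "?R \<noteq> {}"
    using nonempty_disjoint_pairs_finite nonempty_disjoint_pairs_nonempty[OF assms] by auto
  have "r_robust n E r \<longleftrightarrow> r \<le> Min ?R" for r
    using R by (auto simp: r_robust_iff_le_reachability)
  then show ?thesis
    unfolding r_max_def by (intro Greatest_equality) auto
qed

lemma in_nbrs_simple_digraph:
  assumes "simple_digraph n E"
  shows "in_nbrs E i \<subseteq> {1..n}" "i \<notin> in_nbrs E i"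
  using assms unfolding simple_digraph_def in_nbrs_def by auto

lemma lap_row_mult_eq:
  assumes "simple_digraph n E" "i \<in> {1..n}"
  shows "lap_row_mult n E i b = int (card (in_nbrs E i)) * b i - (\<Sum>k\<in>in_nbrs E i. b k)"
proof -
  let ?N = "in_nbrs E i"
  have N: "?N \<subseteq> {1..n}" "i \<notin> ?N"
    using in_nbrs_simple_digraph[OF assms(1)] by auto
  have "laplacian E i k * b k =
      (if k = i then int (card ?N) * b i else 0) - (if k \<in> ?N then b k else 0)" for k
    using N(2) by (auto simp: laplacian_def)
  then have "lap_row_mult n E i b =
      (\<Sum>k\<in>{1..n}. if k = i then int (card ?N) * b i else 0) - (\<Sum>k\<in>{1..n}. if k \<in> ?N then b k else 0)"
    unfolding lap_row_mult_def by (simp add: sum_subtractf)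
  also have "\<dots> = int (card ?N) * b i - (\<Sum>k\<in>?N. b k)"
    using assms(2) Int_absorb1[OF N(1)] by (simp add: sum.If_cases)
  finally show ?thesis .
qed

lemma sum_indicator_int: "finite A \<Longrightarrow> (\<Sum>k\<in>A. indicator S k :: int) = int (card (A \<inter> S))"
  by (simp add: indicator_def sum.If_cases)

lemma lap_row_mult_indicator:
  assumes "simple_digraph n E" "i \<in> {1..n}"
  shows "lap_row_mult n E i (indicator S) =
    (if i \<in> S then int (card (in_nbrs E i - S)) else - int (card (in_nbrs E i \<inter> S)))"
proof -
  let ?N = "in_nbrs E i"
  have "finite ?N"
    using in_nbrs_simple_digraph(1)[OF assms(1)] finite_subset by blast
  then have "int (card ?N) - int (card (?N \<inter> S)) = int (card (?N - S))"
    by (simp add: card_Diff_subset_Int of_nat_diff card_mono)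
  with \<open>finite ?N\<close> show ?thesis
    by (simp add: lap_row_mult_eq[OF assms] sum_indicator_int)
qed

lemma Max_lap_row_mult_indicator:
  assumes sd: "simple_digraph n E" and S: "S \<subseteq> {1..n}" "S \<noteq> {}"
  shows "Max ((\<lambda>i. lap_row_mult n E i (indicator S)) ` {1..n}) = int (reachability E S)"
proof (rule Max_eqI)
  have "finite S"
    using S(1) finite_subset by blast
  then have le: "card (in_nbrs E i - S) \<le> reachability E S" if "i \<in> S" for i
    using that unfolding reachability_def by (intro Max_ge) auto
  show "y \<le> int (reachability E S)" if "y \<in> (\<lambda>i. lap_row_mult n E i (indicator S)) ` {1..n}" for y
    using that le by (auto simp: lap_row_mult_indicator[OF sd])
  have "reachability E S \<in> (\<lambda>i. card (in_nbrs E i - S)) ` S"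
    unfolding reachability_def using \<open>finite S\<close> S(2) by (intro Max_in) auto
  then obtain i where "i \<in> S" "reachability E S = card (in_nbrs E i - S)"
    by auto
  with S(1) show "int (reachability E S) \<in> (\<lambda>i. lap_row_mult n E i (indicator S)) ` {1..n}"
    by (intro image_eqI[of _ _ i]) (auto simp: lap_row_mult_indicator[OF sd])
qed simp

lemma zero_one_vector_eq_indicator:
  assumes "\<forall>k. k \<notin> A \<longrightarrow> b k = 0" "\<forall>k\<in>A. b k \<in> {0, 1 :: int}"
  shows "b = indicator {k \<in> A. b k = 1}"
proof
  show "b k = indicator {k \<in> A. b k = 1} k" for k
    using assms by (cases "k \<in> A") (auto simp: indicator_def)
qed

lemma feasible_pairs_eq_indicator_pairs:
  "feasible_pairs n =
     (\<lambda>(S1, S2). (indicator S1, indicator S2)) ` nonempty_disjoint_pairs n"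
proof (intro equalityI subsetI)
  fix p assume "p \<in> feasible_pairs n"
  then obtain b1 b2 where p: "p = (b1, b2)"
    and zero: "\<forall>k. k \<notin> {1..n} \<longrightarrow> b1 k = 0 \<and> b2 k = 0"
    and bin: "\<forall>k\<in>{1..n}. b1 k \<in> {0, 1} \<and> b2 k \<in> {0, 1} \<and> b1 k + b2 k \<le> 1"
    and sums: "1 \<le> (\<Sum>k\<in>{1..n}. b1 k)" "1 \<le> (\<Sum>k\<in>{1..n}. b2 k)"
    unfolding feasible_pairs_def by auto
  define S1 where "S1 = {k \<in> {1..n}. b1 k = 1}"
  define S2 where "S2 = {k \<in> {1..n}. b2 k = 1}"
  have b: "b1 = indicator S1" "b2 = indicator S2"
    unfolding S1_def S2_def using zero bin by (blast intro: zero_one_vector_eq_indicator)+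
  have "S1 \<inter> S2 = {}"
    using bin unfolding S1_def S2_def by fastforce
  moreover have "S1 \<noteq> {}" "S2 \<noteq> {}"
    using sums unfolding b by auto
  ultimately have "(S1, S2) \<in> nonempty_disjoint_pairs n"
    unfolding nonempty_disjoint_pairs_def S1_def S2_def by auto
  then show "p \<in> (\<lambda>(S1, S2). (indicator S1, indicator S2)) ` nonempty_disjoint_pairs n"
    using p b by auto
next
  fix p :: "(nat \<Rightarrow> int) \<times> (nat \<Rightarrow> int)"
  assume "p \<in> (\<lambda>(S1, S2). (indicator S1, indicator S2)) ` nonempty_disjoint_pairs n"
  then obtain S1 S2 where p: "p = (indicator S1, indicator S2)"
    and S: "S1 \<subseteq> {1..n}" "S2 \<subseteq> {1..n}" "S1 \<noteq> {}" "S2 \<noteq> {}" "S1 \<inter> S2 = {}"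
    unfolding nonempty_disjoint_pairs_def by auto
  have fin: "finite S1" "finite S2"
    using S(1,2) finite_subset by blast+
  have "card S1 + card S2 = card (S1 \<union> S2)"
    using fin S(5) by (simp add: card_Un_disjoint)
  also have "\<dots> \<le> n"
    using card_mono[of "{1..n}" "S1 \<union> S2"] S(1,2) by auto
  finally have "card S1 + card S2 \<le> n" .
  moreover have "card S1 \<ge> 1" "card S2 \<ge> 1"
    using fin S(3,4) by (auto simp: Suc_le_eq card_gt_0_iff)
  moreover have "(\<Sum>k\<in>{1..n}. indicator S k :: int) = int (card S)" if "S \<subseteq> {1..n}" for S
    using that by (simp add: sum_indicator_int Int_absorb1)
  ultimately show "p \<in> feasible_pairs n"
    using S unfolding p feasible_pairs_def by (auto simp: indicator_def)
qed

theorem theorem1: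
  fixes n :: nat and E :: "(nat \<times> nat) set"
  assumes "n \<ge> 2" and "simple_digraph n E"
  shows "int (r_max n E) =
    Min ((\<lambda>(b1, b2). max (Max ((\<lambda>i. lap_row_mult n E i b1) ` {1..n}))
                           (Max ((\<lambda>j. lap_row_mult n E j b2) ` {1..n})))
         ` {(b1, b2). (\<forall>k. k \<notin> {1..n} \<longrightarrow> b1 k = 0 \<and> b2 k = 0)
                    \<and> (\<forall>k\<in>{1..n}. b1 k \<in> {0, 1} \<and> b2 k \<in> {0, 1} \<and> b1 k + b2 k \<le> 1)
                    \<and> 1 \<le> (\<Sum>k\<in>{1..n}. b1 k) \<and> (\<Sum>k\<in>{1..n}. b1 k) \<le> int n - 1
                    \<and> 1 \<le> (\<Sum>k\<in>{1..n}. b2 k) \<and> (\<Sum>k\<in>{1..n}. b2 k) \<le> int n - 1})"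
  (is "_ = Min (?f ` ?F)")
proof -
  let ?P = "nonempty_disjoint_pairs n"
  let ?g = "\<lambda>(S1, S2). max (reachability E S1) (reachability E S2)"
  have feasible: "?F = (\<lambda>(S1, S2). (indicator S1, indicator S2)) ` ?P"
    using feasible_pairs_eq_indicator_pairs[of n] by (simp only: feasible_pairs_def)
  have objective: "?f (case p of (S1, S2) \<Rightarrow> (indicator S1, indicator S2)) = int (?g p)"
    if "p \<in> ?P" for p
  proof -
    obtain S1 S2 where p: "p = (S1, S2)"
      by (cases p)
    with that have S: "S1 \<subseteq> {1..n}" "S2 \<subseteq> {1..n}" "S1 \<noteq> {}" "S2 \<noteq> {}"
      by (simp_all add: nonempty_disjoint_pairs_def)
    show ?thesis
      unfolding p prod.case of_nat_max
      by (simp only: Max_lap_row_mult_indicator[OF assms(2) S(1,3)]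
          Max_lap_row_mult_indicator[OF assms(2) S(2,4)])
  qed
  have "?f ` ?F = int ` ?g ` ?P"
    unfolding feasible image_image by (rule image_cong[OF refl objective])
  then have "Min (?f ` ?F) = int (Min (?g ` ?P))"
    using nonempty_disjoint_pairs_finite nonempty_disjoint_pairs_nonempty[OF assms(1)]
    by (simp add: mono_Min_commute mono_def)
  then show ?thesis
    by (simp add: r_max_eq_Min_reachability[OF assms(1)])
qed

end
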